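(* Let $M$ be an algebraic group and let $\rho\colon M\to M$ be an invertible mapping (or birational correspondence) defined on a Zariski open subset of $M$ such that \[ \sigma(x):=(\rho(y))^{-1}\rho\bigl(\rho(x)(\rho(xy))^{-1}\bigr) \] is independent of $y$ on a Zariski open subset of $M\times M$. Then for any $a\in M$ the mapping $\tilde\rho(x)=\rho(x)a$ also has this property, and $\rho$ and $\tilde\rho$ define one and the same set-theoretical solution of the pentagon equation, i.e. the maps $s(x,y)=(xy,\ \rho(x)(\rho(xy))^{-1})$ and $\tilde s(x,y)=(xy,\ \tilde\rho(x)(\tilde\rho(xy))^{-1})$ coincide.
   Context: A set-theoretical solution of the pentagon equation on a set $M$ is an invertible map $s\colon M\times M\to M\times M$ with $s_{23}\circ s_{13}\circ s_{12}=s_{12}\circ s_{23}$ as maps of $M\times M\times M$, where $s_{ij}$ acts as $s$ on the $i$-th and $j$-th factors and trivially on the remaining one (in the algebraic setting, maps are defined and identities hold on Zariski open subsets). For $\rho$ with the property stated, the operations $x\cdot y=xy$, $x*y=\rho(x)(\rho(xy))^{-1}$ define the solution $s(x,y)=(x\cdot y,x*y)$. *)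

theory Defs
  imports "HOL-Algebra.Group"
begin

definition pent_star :: "('a, 'b) monoid_scheme \<Rightarrow> ('a \<Rightarrow> 'a) \<Rightarrow> 'a \<Rightarrow> 'a \<Rightarrow> 'a" where
  "pent_star G \<rho> x y = \<rho> x \<otimes>\<^bsub>G\<^esub> inv\<^bsub>G\<^esub> (\<rho> (x \<otimes>\<^bsub>G\<^esub> y))"

definition pent_sol :: "('a, 'b) monoid_scheme \<Rightarrow> ('a \<Rightarrow> 'a) \<Rightarrow> 'a \<times> 'a \<Rightarrow> 'a \<times> 'a" where
  "pent_sol G \<rho> p = (fst p \<otimes>\<^bsub>G\<^esub> snd p, pent_star G \<rho> (fst p) (snd p))"

definition pent_sigma :: "('a, 'b) monoid_scheme \<Rightarrow> ('a \<Rightarrow> 'a) \<Rightarrow> 'a \<Rightarrow> 'a \<Rightarrow> 'a" where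
  "pent_sigma G \<rho> x y = inv\<^bsub>G\<^esub> (\<rho> y) \<otimes>\<^bsub>G\<^esub> \<rho> (pent_star G \<rho> x y)"

text \<open>rho (with domain D) has the property on the set W of pairs: every expression
  in the formula for sigma is defined for (x,y) in W, and sigma(x,y) does not depend on y there.\<close>
definition pent_property ::
  "('a, 'b) monoid_scheme \<Rightarrow> ('a \<Rightarrow> 'a) \<Rightarrow> 'a set \<Rightarrow> ('a \<times> 'a) set \<Rightarrow> bool" where
  "pent_property G \<rho> D W \<longleftrightarrow>
     W \<subseteq> carrier G \<times> carrier G \<and>
     (\<forall>(x,y)\<in>W. x \<in> D \<and> y \<in> D \<and> x \<otimes>\<^bsub>G\<^esub> y \<in> D \<and> pent_star G \<rho> x y \<in> D) \<and>
     (\<exists>\<sigma>. \<forall>(x,y)\<in>W. pent_sigma G \<rho> x y = \<sigma> x)"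

end

theory Submission
  imports Defs
begin

text \<open>Replacing \<open>\<rho>(x)\<close> by \<open>\<rho>(x) a\<close> leaves \<open>\<rho>(x) (\<rho>(xy))\<^sup>-\<^sup>1\<close> unchanged, since the
  factor \<open>a\<close> cancels against \<open>a\<^sup>-\<^sup>1\<close>. Hence \<open>x * y\<close>, and with it the solution \<open>s\<close>, is the same
  for both maps, while \<open>\<sigma>(x)\<close> is merely conjugated to \<open>a\<^sup>-\<^sup>1 \<sigma>(x) a\<close>, which is again
  independent of \<open>y\<close>.\<close>

lemma (in group) pent_star_mult_right:
  assumes "\<rho> x \<in> carrier G" "\<rho> (x \<otimes> y) \<in> carrier G" "a \<in> carrier G"
  shows "pent_star G (\<lambda>x. \<rho> x \<otimes> a) x y = pent_star G \<rho> x y"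
proof -
  have "\<rho> x \<otimes> a \<otimes> inv (\<rho> (x \<otimes> y) \<otimes> a) = \<rho> x \<otimes> (a \<otimes> inv a) \<otimes> inv (\<rho> (x \<otimes> y))"
    using assms by (simp add: inv_mult_group m_assoc flip: m_assoc[of a "inv a"])
  also have "\<dots> = \<rho> x \<otimes> inv (\<rho> (x \<otimes> y))"
    using assms by simp
  finally show ?thesis
    unfolding pent_star_def .
qed

lemma (in group) pent_sigma_mult_right:
  assumes "\<rho> x \<in> carrier G" "\<rho> y \<in> carrier G" "\<rho> (x \<otimes> y) \<in> carrier G"
    and "\<rho> (pent_star G \<rho> x y) \<in> carrier G" "a \<in> carrier G"
  shows "pent_sigma G (\<lambda>x. \<rho> x \<otimes> a) x y = inv a \<otimes> pent_sigma G \<rho> x y \<otimes> a"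
proof -
  have "pent_sigma G (\<lambda>x. \<rho> x \<otimes> a) x y
      = inv (\<rho> y \<otimes> a) \<otimes> (\<rho> (pent_star G \<rho> x y) \<otimes> a)"
    unfolding pent_sigma_def using assms by (simp add: pent_star_mult_right)
  also have "\<dots> = inv a \<otimes> (inv (\<rho> y) \<otimes> \<rho> (pent_star G \<rho> x y)) \<otimes> a"
    using assms by (simp add: inv_mult_group m_assoc)
  finally show ?thesis
    unfolding pent_sigma_def .
qed

lemma (in group) pent_property_mult_right:
  assumes "pent_property G \<rho> D W" "\<rho> ` D \<subseteq> carrier G" "a \<in> carrier G"
  shows "pent_property G (\<lambda>x. \<rho> x \<otimes> a) D W"
proof -
  from assms(1) obtain \<sigma> where
    W: "W \<subseteq> carrier G \<times> carrier G" and
    dom: "\<forall>(x, y)\<in>W. x \<in> D \<and> y \<in> D \<and> x \<otimes> y \<in> D \<and> pent_star G \<rho> x y \<in> D" and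
    \<sigma>: "\<forall>(x, y)\<in>W. pent_sigma G \<rho> x y = \<sigma> x"
    unfolding pent_property_def by blast
  have \<rho>_carrier: "\<rho> x \<in> carrier G" "\<rho> y \<in> carrier G" "\<rho> (x \<otimes> y) \<in> carrier G"
      "\<rho> (pent_star G \<rho> x y) \<in> carrier G"
    if "(x, y) \<in> W" for x y
    using bspec[OF dom that] assms(2) by auto
  have "\<forall>(x, y)\<in>W. pent_star G (\<lambda>x. \<rho> x \<otimes> a) x y \<in> D"
  proof clarify
    fix x y assume "(x, y) \<in> W"
    then show "pent_star G (\<lambda>x. \<rho> x \<otimes> a) x y \<in> D"
      using bspec[OF dom] \<rho>_carrier assms(3) by (fastforce simp: pent_star_mult_right)
  qed
  moreover have "\<forall>(x, y)\<in>W. pent_sigma G (\<lambda>x. \<rho> x \<otimes> a) x y = inv a \<otimes> \<sigma> x \<otimes> a"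
  proof clarify
    fix x y assume "(x, y) \<in> W"
    then show "pent_sigma G (\<lambda>x. \<rho> x \<otimes> a) x y = inv a \<otimes> \<sigma> x \<otimes> a"
      using bspec[OF \<sigma>] \<rho>_carrier assms(3) by (fastforce simp: pent_sigma_mult_right)
  qed
  ultimately show ?thesis
    unfolding pent_property_def using W dom by fast
qed

lemma (in group) pent_sol_mult_right:
  assumes "\<rho> x \<in> carrier G" "\<rho> (x \<otimes> y) \<in> carrier G" "a \<in> carrier G"
  shows "pent_sol G (\<lambda>x. \<rho> x \<otimes> a) (x, y) = pent_sol G \<rho> (x, y)"
  using assms by (simp add: pent_sol_def pent_star_mult_right)

lemma (in group) bij_betw_mult_right:
  assumes "bij_betw \<rho> D E" "E \<subseteq> carrier G" "a \<in> carrier G"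
  shows "bij_betw (\<lambda>x. \<rho> x \<otimes> a) D ((\<lambda>z. z \<otimes> a) ` E)"
proof -
  have "bij_betw (\<lambda>z. z \<otimes> a) E ((\<lambda>z. z \<otimes> a) ` E)"
    using inj_on_subset[OF inj_on_multc[OF assms(3)] assms(2)] by (simp add: bij_betw_def)
  from bij_betw_trans[OF assms(1) this] show ?thesis
    by (simp add: comp_def)
qed

theorem mainTheorem1:
  fixes G (structure) and \<rho> :: "'a \<Rightarrow> 'a" and D E :: "'a set"
    and W :: "('a \<times> 'a) set" and a :: 'a
  assumes "group G"
    and "D \<subseteq> carrier G" and "E \<subseteq> carrier G"
    and "bij_betw \<rho> D E"
    and "pent_property G \<rho> D W"
    and "a \<in> carrier G"
  shows "bij_betw (\<lambda>x. \<rho> x \<otimes> a) D ((\<lambda>z. z \<otimes> a) ` E)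
    \<and> pent_property G (\<lambda>x. \<rho> x \<otimes> a) D W
    \<and> (\<forall>x\<in>carrier G. \<forall>y\<in>carrier G. x \<in> D \<longrightarrow> x \<otimes> y \<in> D \<longrightarrow>
          pent_sol G (\<lambda>x. \<rho> x \<otimes> a) (x, y) = pent_sol G \<rho> (x, y))"
proof -
  interpret group G by fact
  have \<rho>_carrier: "\<rho> ` D \<subseteq> carrier G"
    using assms(3,4) by (auto simp: bij_betw_def)
  have "pent_sol G (\<lambda>x. \<rho> x \<otimes> a) (x, y) = pent_sol G \<rho> (x, y)" if "x \<in> D" "x \<otimes> y \<in> D" for x y
    using that \<rho>_carrier assms(6) by (intro pent_sol_mult_right) auto
  then show ?thesis
    using bij_betw_mult_right[OF assms(4,3,6)]
      pent_property_mult_right[OF assms(5) \<rho>_carrier assms(6)]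
    by blast
qed

end
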